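(* Fix $r>0$ and $q>r/2$, and let $\alpha_{\mathsf{high}}(q,r)=(\sqrt q-\sqrt{r/2})^2$. For each $N$ let $\Upsilon_\lambda\sim\mathrm{Pois}(\lambda)$ and $\Upsilon_{\lambda'}\sim\mathrm{Pois}(\lambda')$ be independent, with $\lambda=\lambda(N)$ satisfying $\lambda/\log N\to\infty$ and $\lambda'=\lambda+\sqrt{2\lambda r\log(N)(1+o(1))}$. Then, as $N\to\infty$, $$\Pr\big(\pi(\Upsilon_\lambda,\Upsilon_{\lambda'})\le N^{-q}\big)\ge N^{-\alpha_{\mathsf{high}}(q,r)+o(1)}$$ and $$\Pr\big(\pi(\Upsilon_\lambda,\Upsilon_{\lambda'})\le N^{-q}\big)\le N^{-1+o(1)}+N^{-\alpha_{\mathsf{high}}(q,r)+o(1)}.$$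
   Context: For nonnegative integers $x,y$ put $m=x+y$, let $B\sim\mathrm{Bin}(m,1/2)$ and $\pi(x,y)=\Pr(|B-m/2|\ge|x-m/2|)$ (two-sided exact binomial test P-value). Here $o(1)$ denotes a deterministic quantity tending to $0$ as $N\to\infty$. *)

theory Defs
  imports "HOL-Probability.Probability"
begin

definition pval :: "nat \<Rightarrow> nat \<Rightarrow> real" where
  "pval x y = (let m = x + y in
     measure_pmf.prob (binomial_pmf m (1/2))
       {k. \<bar>real k - real m / 2\<bar> \<ge> \<bar>real x - real m / 2\<bar>})"

definition alpha_high :: "real \<Rightarrow> real \<Rightarrow> real" where
  "alpha_high q r = (sqrt q - sqrt (r / 2))^2"

end

(*
  Write X ~ Pois lam, Y ~ Pois lam', L = ln N and s = sqrt (L / lam), so that lam' = lam (1 + rho s)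
  with rho -> sqrt (2 r). Tilting the pair by exp (t (Y - X)) turns the means into lam e^-t and
  lam' e^t, at the price of the likelihood ratio exp (K t - t (Y - X)), where K is the cumulant
  generating function of Y - X.

  Upper bound: on {Y - X <= 2 sqrt q lam s} tilt to the common mean sqrt (lam lam'). There the test
  is exact (conditionally on X + Y it is a binomial test), so this part has probability at most
  N^-q times the likelihood ratio; the rest is a Chernoff bound for Y - X.
  Lower bound: tilt by t = k s with k slightly larger than sqrt q - sqrt (r / 2). With probability
  at least 1/2 both tilted coordinates then lie within four standard deviations of their means,
  where Hoeffding's inequality already gives pval <= N^-q, and the likelihood ratio there is
  exp (-k^2 L (1 + o(1))).
  All exponents are quadratic in s and both bounds come out as N^-((sqrt q - sqrt (r / 2))^2 + o(1)).
*)

theory Submission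
  imports Defs "HOL-Real_Asymp.Real_Asymp"
begin

lemma exp_le_one_plus_square:
  fixes x :: real
  assumes "x \<le> 1"
  shows "exp x \<le> 1 + x + x\<^sup>2"
proof (cases "0 \<le> x")
  case True
  then show ?thesis
    using assms exp_bound by simp
next
  case False
  have "1 - x \<le> exp (- x)"
    using exp_ge_add_one_self[of "- x"] by simp
  then have "exp x \<le> 1 / (1 - x)"
    using False by (simp add: exp_minus field_simps)
  also have "1 / (1 - x) \<le> 1 + x + x\<^sup>2"
    using False by (simp add: field_simps power2_eq_square) (simp add: algebra_simps mult_nonpos_nonneg)
  finally show ?thesis .
qed

lemma exp_le_half_exp_iff: "exp x \<le> exp y / 2 \<longleftrightarrow> x + ln 2 \<le> (y :: real)"
proof -
  have "exp y / 2 = exp (y - ln 2)"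
    by (subst exp_diff) simp
  then show ?thesis
    by (simp only: exp_le_cancel_iff) linarith
qed

section \<open>Exponential tilting of Poisson laws\<close>

lemma measure_pmf_prob_le_scaled:
  assumes "\<And>z. z \<in> A \<Longrightarrow> pmf p z \<le> c * pmf q z"
  shows "measure_pmf.prob p A \<le> c * measure_pmf.prob q A"
  unfolding measure_pmf_conv_infsetsum infsetsum_cmult_right[OF pmf_abs_summable, symmetric]
  by (intro infsetsum_mono pmf_abs_summable abs_summable_on_cmult_right assms)

lemma measure_pmf_prob_ge_scaled:
  assumes "\<And>z. z \<in> A \<Longrightarrow> c * pmf q z \<le> pmf p z"
  shows "c * measure_pmf.prob q A \<le> measure_pmf.prob p A"
  unfolding measure_pmf_conv_infsetsum infsetsum_cmult_right[OF pmf_abs_summable, symmetric]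
  by (intro infsetsum_mono pmf_abs_summable abs_summable_on_cmult_right assms)

lemma pmf_poisson_tilt:
  assumes "0 < a"
  shows "pmf (poisson_pmf a) k = pmf (poisson_pmf (a * exp h)) k * exp (a * exp h - a - h * k)"
proof -
  have "exp h ^ k * exp (- (a * exp h)) * exp (a * exp h - a - h * k) = exp (- a)"
    by (simp add: exp_of_nat_mult[symmetric] mult.commute exp_add[symmetric])
  then show ?thesis
    using assms by (simp add: power_mult_distrib mult.assoc)
qed

lemma prob_poisson_le_exp:
  assumes "0 < a" and "\<And>k. k \<in> A \<Longrightarrow> c \<le> h * real k"
  shows "measure_pmf.prob (poisson_pmf a) A \<le> exp (a * (exp h - 1) - c)"
proof -
  have "measure_pmf.prob (poisson_pmf a) A
      \<le> exp (a * (exp h - 1) - c) * measure_pmf.prob (poisson_pmf (a * exp h)) A"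
  proof (rule measure_pmf_prob_le_scaled)
    fix k assume "k \<in> A"
    then have "exp (a * exp h - a - h * k) \<le> exp (a * (exp h - 1) - c)"
      using assms(2) by (simp add: algebra_simps)
    then show "pmf (poisson_pmf a) k \<le> exp (a * (exp h - 1) - c) * pmf (poisson_pmf (a * exp h)) k"
      by (subst pmf_poisson_tilt[OF assms(1), of _ h]) (simp add: mult.commute mult_left_mono)
  qed
  also have "\<dots> \<le> exp (a * (exp h - 1) - c)"
    by (simp add: mult_left_le)
  finally show ?thesis .
qed

lemma prob_poisson_far_from_mean:
  assumes "4 \<le> a"
  shows "measure_pmf.prob (poisson_pmf a) {k. 4 * sqrt a \<le> \<bar>real k - a\<bar>} \<le> 1 / 4"
proof -
  define h where "h = 2 / sqrt a"
  have "0 < a" "2 \<le> sqrt a" "sqrt a * sqrt a = a"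
    using assms real_sqrt_le_mono[of 4 a] by auto
  then have h: "0 < h" "h \<le> 1" "a * h\<^sup>2 = 4" "h * (4 * sqrt a) = 8"
    by (auto simp: h_def field_simps power2_eq_square)
  have tail: "measure_pmf.prob (poisson_pmf a) {k. 4 * sqrt a \<le> \<sigma> * (real k - a)} \<le> exp (- 4)"
    if \<sigma>: "\<sigma> \<in> {- 1, 1}" for \<sigma> :: real
  proof -
    have "measure_pmf.prob (poisson_pmf a) {k. 4 * sqrt a \<le> \<sigma> * (real k - a)}
        \<le> exp (a * (exp (\<sigma> * h) - 1) - (\<sigma> * h * a + 8))"
    proof (rule prob_poisson_le_exp)
      fix k assume "k \<in> {k. 4 * sqrt a \<le> \<sigma> * (real k - a)}"
      then have "h * (4 * sqrt a) \<le> h * (\<sigma> * (real k - a))"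
        using h by (simp add: mult_left_mono)
      then show "\<sigma> * h * a + 8 \<le> \<sigma> * h * real k"
        using h by (simp add: algebra_simps)
    qed (use assms in simp)
    also have "\<dots> \<le> exp (- 4)"
    proof -
      have "\<sigma>\<^sup>2 = 1" "\<sigma> * h \<le> 1"
        using \<sigma> h(1,2) by auto
      then have "exp (\<sigma> * h) \<le> 1 + \<sigma> * h + h\<^sup>2"
        using exp_le_one_plus_square[of "\<sigma> * h"] by (simp add: power_mult_distrib)
      then have "a * (exp (\<sigma> * h) - 1) \<le> a * (\<sigma> * h + h\<^sup>2)"
        using assms by (intro mult_left_mono) auto
      also have "\<dots> = \<sigma> * h * a + 4"
        using h(3) by (simp add: distrib_left mult.commute mult.left_commute)
      finally show ?thesis
        by simp
    qed
    finally show ?thesis .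
  qed
  have "{k. 4 * sqrt a \<le> \<bar>real k - a\<bar>}
      = {k. 4 * sqrt a \<le> 1 * (real k - a)} \<union> {k. 4 * sqrt a \<le> - 1 * (real k - a)}"
    by auto
  then have "measure_pmf.prob (poisson_pmf a) {k. 4 * sqrt a \<le> \<bar>real k - a\<bar>}
      \<le> measure_pmf.prob (poisson_pmf a) {k. 4 * sqrt a \<le> 1 * (real k - a)}
        + measure_pmf.prob (poisson_pmf a) {k. 4 * sqrt a \<le> - 1 * (real k - a)}"
    by (simp only:) (rule measure_Un_le; simp)
  also have "\<dots> \<le> 2 * exp (- 4)"
    using tail[of 1] tail[of "- 1"] by simp
  also have "\<dots> \<le> 1 / 4"
  proof -
    have "3 * 3 \<le> exp 2 * exp (2 :: real)"
      using exp_ge_add_one_self[of 2] by (intro mult_mono) auto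
    then show ?thesis
      by (simp add: exp_minus exp_add[symmetric] field_simps)
  qed
  finally show ?thesis .
qed

text \<open>The cumulant generating function of \<open>Y - X\<close> for independent \<open>X \<sim> Pois l\<close> and \<open>Y \<sim> Pois l'\<close>.\<close>
definition skellam_cgf :: "real \<Rightarrow> real \<Rightarrow> real \<Rightarrow> real" where
  "skellam_cgf l l' t = l * (exp (- t) - 1) + l' * (exp t - 1)"

lemma pmf_pair_poisson_tilt:
  assumes "0 < l" "0 < l'"
  shows "pmf (pair_pmf (poisson_pmf l) (poisson_pmf l')) (x, y) =
    pmf (pair_pmf (poisson_pmf (l * exp (- t))) (poisson_pmf (l' * exp t))) (x, y)
      * exp (skellam_cgf l l' t - t * (real y - real x))"
proof -
  have "skellam_cgf l l' t - t * (real y - real x)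
      = (l * exp (- t) - l - (- t) * x) + (l' * exp t - l' - t * y)"
    by (simp add: skellam_cgf_def algebra_simps)
  then show ?thesis
    unfolding pmf_pair fst_conv snd_conv
    by (subst pmf_poisson_tilt[OF assms(1), of _ "- t"], subst pmf_poisson_tilt[OF assms(2), of _ t])
      (simp add: exp_add)
qed

lemma prob_pair_poisson_le_tilted:
  assumes "0 < l" "0 < l'" and "\<And>x y. (x, y) \<in> A \<Longrightarrow> c \<le> t * (real y - real x)"
  shows "measure_pmf.prob (pair_pmf (poisson_pmf l) (poisson_pmf l')) A
    \<le> exp (skellam_cgf l l' t - c)
      * measure_pmf.prob (pair_pmf (poisson_pmf (l * exp (- t))) (poisson_pmf (l' * exp t))) A"
proof (rule measure_pmf_prob_le_scaled)
  fix z assume "z \<in> A"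
  moreover obtain x y where z: "z = (x, y)"
    by fastforce
  ultimately have "exp (skellam_cgf l l' t - t * (real y - real x)) \<le> exp (skellam_cgf l l' t - c)"
    using assms(3) by simp
  then show "pmf (pair_pmf (poisson_pmf l) (poisson_pmf l')) z
      \<le> exp (skellam_cgf l l' t - c) * pmf (pair_pmf (poisson_pmf (l * exp (- t))) (poisson_pmf (l' * exp t))) z"
    unfolding z pmf_pair_poisson_tilt[OF assms(1,2), of x y t]
    using mult_left_mono[OF _ pmf_nonneg] by (metis mult.commute)
qed

lemma prob_pair_poisson_ge_tilted:
  assumes "0 < l" "0 < l'" and "\<And>x y. (x, y) \<in> A \<Longrightarrow> t * (real y - real x) \<le> c"
  shows "exp (skellam_cgf l l' t - c)
      * measure_pmf.prob (pair_pmf (poisson_pmf (l * exp (- t))) (poisson_pmf (l' * exp t))) A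
    \<le> measure_pmf.prob (pair_pmf (poisson_pmf l) (poisson_pmf l')) A"
proof (rule measure_pmf_prob_ge_scaled)
  fix z assume "z \<in> A"
  moreover obtain x y where z: "z = (x, y)"
    by fastforce
  ultimately have "exp (skellam_cgf l l' t - c) \<le> exp (skellam_cgf l l' t - t * (real y - real x))"
    using assms(3) by simp
  then show "exp (skellam_cgf l l' t - c) * pmf (pair_pmf (poisson_pmf (l * exp (- t))) (poisson_pmf (l' * exp t))) z
      \<le> pmf (pair_pmf (poisson_pmf l) (poisson_pmf l')) z"
    unfolding z pmf_pair_poisson_tilt[OF assms(1,2), of x y t]
    using mult_left_mono[OF _ pmf_nonneg] by (metis mult.commute)
qed

corollary prob_skellam_upper_tail:
  assumes "0 < l" "0 < l'" "0 \<le> t"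
  shows "measure_pmf.prob (pair_pmf (poisson_pmf l) (poisson_pmf l')) {(x, y). d < real y - real x}
    \<le> exp (skellam_cgf l l' t - t * d)"
proof -
  have "measure_pmf.prob (pair_pmf (poisson_pmf l) (poisson_pmf l')) {(x, y). d < real y - real x}
      \<le> exp (skellam_cgf l l' t - t * d)
        * measure_pmf.prob (pair_pmf (poisson_pmf (l * exp (- t))) (poisson_pmf (l' * exp t)))
            {(x, y). d < real y - real x}"
    using assms by (intro prob_pair_poisson_le_tilted) (auto intro: mult_left_mono)
  also have "\<dots> \<le> exp (skellam_cgf l l' t - t * d)"
    by (simp add: mult_left_le)
  finally show ?thesis .
qed

section \<open>Validity of the exact binomial test\<close>

lemma pair_poisson_eq_bind_binomial:
  assumes "0 < \<mu>"
  shows "pair_pmf (poisson_pmf \<mu>) (poisson_pmf \<mu>) =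
    bind_pmf (poisson_pmf (2 * \<mu>)) (\<lambda>m. map_pmf (\<lambda>k. (k, m - k)) (binomial_pmf m (1 / 2)))"
proof (rule pmf_eqI)
  fix z :: "nat \<times> nat"
  obtain x y where z: "z = (x, y)"
    by fastforce
  let ?c = "pmf (binomial_pmf (x + y) (1 / 2)) x"
  have split: "pmf (map_pmf (\<lambda>k. (k, m - k)) (binomial_pmf m (1 / 2))) (x, y) = indicator {x + y} m * ?c"
    for m
  proof (cases "m = x + y")
    case True
    have "inj (\<lambda>k. (k, m - k))"
      by (rule injI) simp
    from pmf_map_inj'[OF this, of "binomial_pmf m (1 / 2)" x] True show ?thesis
      by simp
  next
    case False
    then have "(x, y) \<notin> (\<lambda>k. (k, m - k)) ` set_pmf (binomial_pmf m (1 / 2))"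
      by auto
    with False show ?thesis
      by (simp add: pmf_map_outside)
  qed
  have "pmf (poisson_pmf (2 * \<mu>)) (x + y) * ?c = pmf (poisson_pmf \<mu>) x * pmf (poisson_pmf \<mu>) y"
  proof -
    have "?c = fact (x + y) / (fact x * fact y) * (1 / 2) ^ (x + y)"
      by (simp add: binomial_fact power_add)
    moreover have "exp (- (2 * \<mu>)) = exp (- \<mu>) * exp (- \<mu>)"
      by (simp add: exp_add[symmetric])
    ultimately show ?thesis
      using assms by (simp add: power_add field_simps)
  qed
  then show "pmf (pair_pmf (poisson_pmf \<mu>) (poisson_pmf \<mu>)) z
      = pmf (bind_pmf (poisson_pmf (2 * \<mu>)) (\<lambda>m. map_pmf (\<lambda>k. (k, m - k)) (binomial_pmf m (1 / 2)))) z"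
    by (simp add: z pmf_pair pmf_bind split measure_pmf_single)
qed

lemma prob_binomial_pval_le:
  assumes "0 \<le> u"
  shows "measure_pmf.prob (binomial_pmf m (1 / 2)) {k. pval k (m - k) \<le> u} \<le> u"
proof -
  let ?B = "binomial_pmf m (1 / 2)"
  define A where "A = {k. pval k (m - k) \<le> u} \<inter> {..m}"
  have prob_A: "measure_pmf.prob ?B {k. pval k (m - k) \<le> u} = measure_pmf.prob ?B A"
  proof -
    have "set_pmf ?B = {..m}"
      by simp
    then show ?thesis
      unfolding A_def by (metis measure_Int_set_pmf)
  qed
  show ?thesis
  proof (cases "A = {}")
    case True
    then show ?thesis
      using prob_A assms by simp
  next
    case False
    define dev where "dev k = \<bar>real k - real m / 2\<bar>" for k :: nat
    have "Min (dev ` A) \<in> dev ` A"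
      using False by (intro Min_in) (auto simp: A_def)
    then obtain k0 where k0: "k0 \<in> A" "dev k0 = Min (dev ` A)"
      by (metis imageE)
    have "A \<subseteq> {j. dev k0 \<le> dev j}"
      using k0 Min_le[of "dev ` A"] by (auto simp: A_def)
    then have "measure_pmf.prob ?B A \<le> measure_pmf.prob ?B {j. dev k0 \<le> dev j}"
      by (intro measure_pmf.finite_measure_mono) auto
    also have "\<dots> = pval k0 (m - k0)"
      using k0 by (simp add: A_def pval_def dev_def Let_def)
    also have "\<dots> \<le> u"
      using k0 by (simp add: A_def)
    finally show ?thesis
      using prob_A by simp
  qed
qed

lemma prob_pval_le_null:
  assumes "0 < \<mu>" "0 \<le> u"
  shows "measure_pmf.prob (pair_pmf (poisson_pmf \<mu>) (poisson_pmf \<mu>)) {(x, y). pval x y \<le> u} \<le> u"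
proof -
  let ?E = "{(x, y). pval x y \<le> u}"
  have "emeasure (measure_pmf (pair_pmf (poisson_pmf \<mu>) (poisson_pmf \<mu>))) ?E =
      (\<integral>\<^sup>+m. emeasure (measure_pmf (map_pmf (\<lambda>k. (k, m - k)) (binomial_pmf m (1 / 2)))) ?E
        \<partial>measure_pmf (poisson_pmf (2 * \<mu>)))"
    by (simp add: pair_poisson_eq_bind_binomial[OF assms(1)])
  also have "\<dots> \<le> (\<integral>\<^sup>+m. ennreal u \<partial>measure_pmf (poisson_pmf (2 * \<mu>)))"
  proof (intro nn_integral_mono)
    fix m
    have "emeasure (measure_pmf (map_pmf (\<lambda>k. (k, m - k)) (binomial_pmf m (1 / 2)))) ?E
        = ennreal (measure_pmf.prob (binomial_pmf m (1 / 2)) {k. pval k (m - k) \<le> u})"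
      by (simp add: measure_pmf.emeasure_eq_measure vimage_def)
    also have "\<dots> \<le> ennreal u"
      using prob_binomial_pval_le[OF assms(2)] by (intro ennreal_leI)
    finally show "emeasure (measure_pmf (map_pmf (\<lambda>k. (k, m - k)) (binomial_pmf m (1 / 2)))) ?E \<le> ennreal u" .
  qed
  also have "\<dots> = ennreal u"
    by (simp add: measure_pmf.emeasure_space_1)
  finally show ?thesis
    using assms by (simp add: measure_pmf.emeasure_eq_measure)
qed

lemma pval_le_hoeffding: "pval x y \<le> 2 * exp (- ((real y - real x)\<^sup>2 / (2 * real (x + y))))"
proof (cases "x = y")
  case True
  have "pval x y \<le> 1"
    by (simp add: pval_def Let_def)
  then show ?thesis
    using True by simp
next
  case False
  define m where "m = x + y"
  have "0 < m"
    using False unfolding m_def by linarith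
  have "\<bar>real x - real m / 2\<bar> = \<bar>real y - real x\<bar> / 2"
    by (simp add: m_def abs_if field_simps)
  then have "pval x y
      = measure_pmf.prob (binomial_pmf m (1 / 2)) {k. \<bar>real k - real m * (1 / 2)\<bar> \<ge> \<bar>real y - real x\<bar> / 2}"
    unfolding pval_def Let_def m_def[symmetric] \<open>\<bar>real x - real m / 2\<bar> = \<bar>real y - real x\<bar> / 2\<close> by simp
  also have "\<dots> \<le> 2 * exp (- 2 * (\<bar>real y - real x\<bar> / 2)\<^sup>2 / real m)"
    by (rule binomial_distribution.prob_abs_ge) (use \<open>0 < m\<close> in \<open>auto simp: binomial_distribution_def\<close>)
  also have "\<dots> = 2 * exp (- ((real y - real x)\<^sup>2 / (2 * real (x + y))))"
    by (simp add: m_def power_divide)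
  finally show ?thesis .
qed

section \<open>Non-asymptotic bounds on the rejection probability\<close>

lemma skellam_cgf_geometric_mean_tilt:
  assumes "0 < l" "0 < l'"
  defines "t0 \<equiv> ln (l' / l) / 2"
  shows "l * exp t0 = sqrt l * sqrt l'" "l' * exp (- t0) = sqrt l * sqrt l'"
    and "skellam_cgf l l' (- t0) = - (sqrt l' - sqrt l)\<^sup>2"
proof -
  have "t0 = ln (sqrt l' / sqrt l)"
    using assms by (simp add: t0_def ln_sqrt real_sqrt_divide[symmetric])
  then have exp_t0: "exp t0 = sqrt l' / sqrt l"
    using assms by simp
  have sq: "sqrt l * sqrt l = l" "sqrt l' * sqrt l' = l'" and "0 < sqrt l" "0 < sqrt l'"
    using assms by simp_all
  have "l * exp t0 = (sqrt l * sqrt l) * (sqrt l' / sqrt l)"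
    by (simp only: exp_t0 sq)
  also have "\<dots> = sqrt l * sqrt l'"
    using \<open>0 < sqrt l\<close> by (simp add: field_simps)
  finally show mean_x: "l * exp t0 = sqrt l * sqrt l'" .
  have "l' * exp (- t0) = (sqrt l' * sqrt l') * (sqrt l / sqrt l')"
    by (simp only: exp_minus exp_t0 sq inverse_divide)
  also have "\<dots> = sqrt l * sqrt l'"
    using \<open>0 < sqrt l'\<close> by (simp add: field_simps)
  finally show mean_y: "l' * exp (- t0) = sqrt l * sqrt l'" .
  have "skellam_cgf l l' (- t0) = 2 * (sqrt l * sqrt l') - l - l'"
    using mean_x mean_y by (simp add: skellam_cgf_def algebra_simps)
  also have "\<dots> = - (sqrt l' - sqrt l)\<^sup>2"
    using assms by (simp add: power2_diff algebra_simps)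
  finally show "skellam_cgf l l' (- t0) = - (sqrt l' - sqrt l)\<^sup>2" .
qed

lemma prob_pval_le_upper_bound:
  assumes "0 < l" "l \<le> l'" "0 \<le> u" "0 \<le> t"
  shows "measure_pmf.prob (pair_pmf (poisson_pmf l) (poisson_pmf l')) {(x, y). pval x y \<le> u}
    \<le> exp (ln (l' / l) / 2 * d - (sqrt l' - sqrt l)\<^sup>2) * u + exp (skellam_cgf l l' t - t * d)"
proof -
  let ?P = "pair_pmf (poisson_pmf l) (poisson_pmf l')"
  let ?E = "{(x, y). pval x y \<le> u}"
  let ?F = "{(x, y). real y - real x \<le> d}"
  define t0 where "t0 = ln (l' / l) / 2"
  have "0 < l'" "0 \<le> t0"
    using assms by (auto simp: t0_def)
  note tilt = skellam_cgf_geometric_mean_tilt[OF assms(1) \<open>0 < l'\<close>, folded t0_def]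
  have "measure_pmf.prob ?P (?E \<inter> ?F)
      \<le> exp (skellam_cgf l l' (- t0) - (- t0 * d))
        * measure_pmf.prob (pair_pmf (poisson_pmf (l * exp (- (- t0)))) (poisson_pmf (l' * exp (- t0)))) (?E \<inter> ?F)"
  proof (rule prob_pair_poisson_le_tilted[OF assms(1) \<open>0 < l'\<close>])
    fix x y assume "(x, y) \<in> ?E \<inter> ?F"
    then have "real y - real x \<le> d"
      by simp
    from mult_left_mono[OF this \<open>0 \<le> t0\<close>] show "- t0 * d \<le> - t0 * (real y - real x)"
      by simp
  qed
  also have "\<dots> \<le> exp (t0 * d - (sqrt l' - sqrt l)\<^sup>2) * u"
  proof -
    have "0 < sqrt l * sqrt l'"
      using assms \<open>0 < l'\<close> by simp
    have "measure_pmf.prob (pair_pmf (poisson_pmf (l * exp (- (- t0)))) (poisson_pmf (l' * exp (- t0)))) (?E \<inter> ?F)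
        \<le> measure_pmf.prob (pair_pmf (poisson_pmf (sqrt l * sqrt l')) (poisson_pmf (sqrt l * sqrt l'))) ?E"
      unfolding minus_minus tilt(1,2) by (intro measure_pmf.finite_measure_mono) auto
    also have "\<dots> \<le> u"
      by (rule prob_pval_le_null[OF \<open>0 < sqrt l * sqrt l'\<close> assms(3)])
    finally have null: "measure_pmf.prob (pair_pmf (poisson_pmf (l * exp (- (- t0))))
        (poisson_pmf (l' * exp (- t0)))) (?E \<inter> ?F) \<le> u" .
    have "exp (skellam_cgf l l' (- t0) - (- t0 * d)) = exp (t0 * d - (sqrt l' - sqrt l)\<^sup>2)"
      by (simp add: tilt(3))
    then show ?thesis
      using mult_left_mono[OF null exp_ge_zero] by simp
  qed
  finally have null_part: "measure_pmf.prob ?P (?E \<inter> ?F) \<le> exp (t0 * d - (sqrt l' - sqrt l)\<^sup>2) * u" .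
  have "measure_pmf.prob ?P ?E \<le> measure_pmf.prob ?P ((?E \<inter> ?F) \<union> {(x, y). d < real y - real x})"
    by (intro measure_pmf.finite_measure_mono) auto
  also have "\<dots> \<le> measure_pmf.prob ?P (?E \<inter> ?F) + measure_pmf.prob ?P {(x, y). d < real y - real x}"
    by (rule measure_Un_le) simp_all
  finally show ?thesis
    using null_part prob_skellam_upper_tail[OF assms(1) \<open>0 < l'\<close> assms(4), of d] by (simp add: t0_def)
qed

corollary prob_pval_le_exp:
  assumes "0 < l" "l \<le> l'" "0 \<le> t"
    and "ln (l' / l) / 2 * d - (sqrt l' - sqrt l)\<^sup>2 + a + ln 2 \<le> b"
    and "skellam_cgf l l' t - t * d + ln 2 \<le> b"
  shows "measure_pmf.prob (pair_pmf (poisson_pmf l) (poisson_pmf l')) {(x, y). pval x y \<le> exp a} \<le> exp b"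
proof -
  have "measure_pmf.prob (pair_pmf (poisson_pmf l) (poisson_pmf l')) {(x, y). pval x y \<le> exp a}
      \<le> exp (ln (l' / l) / 2 * d - (sqrt l' - sqrt l)\<^sup>2) * exp a + exp (skellam_cgf l l' t - t * d)"
    using assms(1-3) by (intro prob_pval_le_upper_bound) auto
  also have "\<dots> \<le> exp b / 2 + exp b / 2"
    unfolding exp_add[symmetric] using assms(4,5) by (intro add_mono) (simp_all only: exp_le_half_exp_iff)
  finally show ?thesis
    by simp
qed

lemma pval_le_in_windows:
  fixes mx my :: real
  defines "w \<equiv> 4 * sqrt mx + 4 * sqrt my"
  assumes "\<bar>real x - mx\<bar> < 4 * sqrt mx" "\<bar>real y - my\<bar> < 4 * sqrt my" "w < my - mx"
  shows "pval x y \<le> 2 * exp (- ((my - mx - w)\<^sup>2 / (2 * (mx + my + w))))"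
proof -
  have D: "my - mx - w < real y - real x" and S: "real (x + y) < mx + my + w"
    using assms by (auto simp: w_def abs_less_iff)
  have "0 < my - mx - w"
    using assms by simp
  then have "(my - mx - w)\<^sup>2 / (2 * (mx + my + w)) \<le> (real y - real x)\<^sup>2 / (2 * real (x + y))"
    using D S by (intro frac_le power_mono) auto
  then have "2 * exp (- ((real y - real x)\<^sup>2 / (2 * real (x + y))))
      \<le> 2 * exp (- ((my - mx - w)\<^sup>2 / (2 * (mx + my + w))))"
    by simp
  then show ?thesis
    using pval_le_hoeffding[of x y] by linarith
qed

lemma prob_pval_le_lower_bound:
  assumes "0 < l" "0 < l'" "0 \<le> t"
  defines "mx \<equiv> l * exp (- t)" and "my \<equiv> l' * exp t"
  defines "w \<equiv> 4 * sqrt mx + 4 * sqrt my"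
  assumes "4 \<le> mx" "4 \<le> my" and gap: "w < my - mx"
    and margin: "2 * exp (- ((my - mx - w)\<^sup>2 / (2 * (mx + my + w)))) \<le> u"
  shows "exp (skellam_cgf l l' t - t * (my - mx + w)) / 2
    \<le> measure_pmf.prob (pair_pmf (poisson_pmf l) (poisson_pmf l')) {(x, y). pval x y \<le> u}"
proof -
  define W where "W m = {k. \<bar>real k - m\<bar> < 4 * sqrt m}" for m
  let ?Q = "pair_pmf (poisson_pmf mx) (poisson_pmf my)"
  have window: "3 / 4 \<le> measure_pmf.prob (poisson_pmf m) (W m)" if "4 \<le> m" for m
  proof -
    have "W m = UNIV - {k. 4 * sqrt m \<le> \<bar>real k - m\<bar>}"
      by (auto simp: W_def)
    moreover have "measure_pmf.prob (poisson_pmf m) (UNIV - {k. 4 * sqrt m \<le> \<bar>real k - m\<bar>})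
        = 1 - measure_pmf.prob (poisson_pmf m) {k. 4 * sqrt m \<le> \<bar>real k - m\<bar>}"
      by (rule measure_pmf.prob_compl[simplified])
    ultimately show ?thesis
      using prob_poisson_far_from_mean[OF that] by simp
  qed
  have typical: "1 / 2 \<le> measure_pmf.prob ?Q (W mx \<times> W my)"
  proof -
    have "(3 / 4) * (3 / 4) \<le> measure_pmf.prob (poisson_pmf mx) (W mx) * measure_pmf.prob (poisson_pmf my) (W my)"
      using window assms by (intro mult_mono) auto
    then show ?thesis
      by (simp add: measure_pmf_prob_product)
  qed
  have rejects: "W mx \<times> W my \<subseteq> {(x, y). pval x y \<le> u}"
  proof safe
    fix x y assume "x \<in> W mx" "y \<in> W my"
    then have "pval x y \<le> 2 * exp (- ((my - mx - w)\<^sup>2 / (2 * (mx + my + w))))"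
      unfolding w_def using gap by (intro pval_le_in_windows) (auto simp: W_def w_def)
    then show "pval x y \<le> u"
      using margin by linarith
  qed
  have "exp (skellam_cgf l l' t - t * (my - mx + w)) / 2
      \<le> exp (skellam_cgf l l' t - t * (my - mx + w)) * measure_pmf.prob ?Q (W mx \<times> W my)"
    using mult_left_mono[OF typical exp_ge_zero] by simp
  also have "\<dots> \<le> measure_pmf.prob (pair_pmf (poisson_pmf l) (poisson_pmf l')) (W mx \<times> W my)"
    unfolding mx_def my_def
  proof (rule prob_pair_poisson_ge_tilted[OF assms(1,2)])
    fix x y assume "(x, y) \<in> W (l * exp (- t)) \<times> W (l' * exp t)"
    then have "real y - real x \<le> my - mx + w"
      by (auto simp: W_def w_def mx_def my_def abs_less_iff)
    then show "t * (real y - real x) \<le> t * (l' * exp t - l * exp (- t) + w)"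
      using assms(3) by (simp add: mult_left_mono mx_def my_def)
  qed
  also have "\<dots> \<le> measure_pmf.prob (pair_pmf (poisson_pmf l) (poisson_pmf l')) {(x, y). pval x y \<le> u}"
    using rejects by (intro measure_pmf.finite_measure_mono) auto
  finally show ?thesis .
qed

section \<open>Asymptotics\<close>

text \<open>\<open>L\<close> plays the role of \<open>ln N\<close> and \<open>rho N\<close> that of \<open>sqrt (2 r (1 + eps N))\<close>: the alternative
  mean exceeds \<open>lam\<close> by \<open>rho N * sqrt (L N)\<close> standard deviations.\<close>
locale poisson_mean_shift =
  fixes lam lam' L rho :: "nat \<Rightarrow> real" and rho0 :: real
  assumes lam_pos: "\<forall>\<^sub>F N in sequentially. 0 < lam N"
    and lam'_eq: "\<And>N. lam' N = lam N + rho N * sqrt (lam N * L N)"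
    and L_at_top: "filterlim L at_top sequentially"
    and L_over_lam: "(\<lambda>N. L N / lam N) \<longlonglongrightarrow> 0"
    and rho_lim: "rho \<longlonglongrightarrow> rho0"
    and rho0_pos: "0 < rho0"
begin

definition scale :: "nat \<Rightarrow> real" where
  "scale N = sqrt (L N / lam N)"

lemma scale_lim: "scale \<longlonglongrightarrow> 0"
  using tendsto_real_sqrt[OF L_over_lam] by (simp add: scale_def[abs_def])

lemma eventually_L_pos: "\<forall>\<^sub>F N in sequentially. 0 < L N"
  using L_at_top by (simp add: filterlim_at_top_dense)

lemma eventually_scaling:
  "\<forall>\<^sub>F N in sequentially. 0 < lam N \<and> 0 < rho N \<and> 0 < scale N \<and>
     L N = lam N * (scale N)\<^sup>2 \<and> sqrt (L N) = sqrt (lam N) * scale N \<and>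
     lam' N = lam N * (1 + rho N * scale N)"
  using lam_pos eventually_L_pos order_tendstoD(1)[OF rho_lim rho0_pos]
proof eventually_elim
  case (elim N)
  have "sqrt (lam N * L N) = sqrt ((lam N)\<^sup>2) * sqrt (L N / lam N)"
    unfolding real_sqrt_mult[symmetric] using elim by (simp add: power2_eq_square)
  then have "sqrt (lam N * L N) = lam N * scale N"
    using elim by (simp add: scale_def)
  moreover have "sqrt (L N) = sqrt (lam N) * scale N"
    using elim by (simp add: scale_def real_sqrt_mult[symmetric])
  moreover have "(scale N)\<^sup>2 = L N / lam N" "0 < scale N"
    using elim by (simp_all add: scale_def)
  ultimately show ?case
    using elim by (simp add: lam'_eq algebra_simps)
qed

lemma lam_at_top: "filterlim lam at_top sequentially"
proof (rule filterlim_at_top_mono[OF L_at_top])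
  show "\<forall>\<^sub>F N in sequentially. L N \<le> lam N"
    using eventually_scaling order_tendstoD(2)[OF scale_lim zero_less_one]
  proof eventually_elim
    case (elim N)
    then have "(scale N)\<^sup>2 \<le> 1"
      by (simp add: power_le_one)
    then show ?case
      using elim by (simp add: mult_left_le)
  qed
qed

lemma tendsto_const_over_L: "(\<lambda>N. c / L N) \<longlonglongrightarrow> 0"
  using L_at_top by (intro tendsto_divide_0[OF tendsto_const] filterlim_at_top_imp_at_infinity)

lemma tendsto_inverse_sqrt_L: "(\<lambda>N. 1 / sqrt (L N)) \<longlonglongrightarrow> 0"
  using filterlim_compose[OF sqrt_at_top L_at_top]
  by (intro tendsto_divide_0[OF tendsto_const] filterlim_at_top_imp_at_infinity)

lemma tendsto_comp_mult_scale:
  assumes "(f \<longlongrightarrow> c) (at 0)" "a \<longlonglongrightarrow> a0" "0 < a0"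
  shows "(\<lambda>N. f (a N * scale N)) \<longlonglongrightarrow> c"
proof (rule tendsto_compose_eventually[OF assms(1)])
  show "(\<lambda>N. a N * scale N) \<longlonglongrightarrow> 0"
    using tendsto_mult[OF assms(2) scale_lim] by simp
  show "\<forall>\<^sub>F N in sequentially. a N * scale N \<noteq> 0"
    using order_tendstoD(1)[OF assms(2,3)] eventually_scaling by eventually_elim auto
qed

lemma tendsto_null_tilt_exponent:
  "(\<lambda>N. (ln (lam' N / lam N) / 2 * (c * lam N * scale N) - (sqrt (lam' N) - sqrt (lam N))\<^sup>2) / L N)
     \<longlonglongrightarrow> c * rho0 / 2 - rho0\<^sup>2 / 4"
proof -
  define G1 where "G1 N = ln (1 + rho N * scale N) / (rho N * scale N)" for N
  define G2 where "G2 N = (sqrt (1 + rho N * scale N) - 1) / (rho N * scale N)" for N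
  have G1: "G1 \<longlonglongrightarrow> 1"
    unfolding G1_def[abs_def]
    by (rule tendsto_comp_mult_scale[of "\<lambda>g. ln (1 + g) / g", OF _ rho_lim rho0_pos]) real_asymp
  have G2: "G2 \<longlonglongrightarrow> 1 / 2"
    unfolding G2_def[abs_def]
    by (rule tendsto_comp_mult_scale[of "\<lambda>g. (sqrt (1 + g) - 1) / g", OF _ rho_lim rho0_pos]) real_asymp
  have "(\<lambda>N. c * rho N * G1 N / 2 - (rho N * G2 N)\<^sup>2) \<longlonglongrightarrow> c * rho0 / 2 - rho0\<^sup>2 / 4"
    by (auto intro!: tendsto_eq_intros G1 G2 rho_lim simp: power2_eq_square)
  then show ?thesis
  proof (rule Lim_transform_eventually)
    show "\<forall>\<^sub>F N in sequentially. c * rho N * G1 N / 2 - (rho N * G2 N)\<^sup>2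
      = (ln (lam' N / lam N) / 2 * (c * lam N * scale N) - (sqrt (lam' N) - sqrt (lam N))\<^sup>2) / L N"
      using eventually_scaling
    proof eventually_elim
      case (elim N)
      then have pos: "0 < lam N" "0 < rho N" "0 < scale N" and L: "L N = lam N * (scale N)\<^sup>2"
        and lam': "lam' N = lam N * (1 + rho N * scale N)"
        by auto
      have ln_eq: "ln (lam' N / lam N) = ln (1 + rho N * scale N)"
        using pos by (simp add: lam')
      have "sqrt (lam' N) - sqrt (lam N) = sqrt (lam N) * (sqrt (1 + rho N * scale N) - 1)"
        unfolding lam' real_sqrt_mult by (simp add: algebra_simps)
      then have sq_eq: "(sqrt (lam' N) - sqrt (lam N))\<^sup>2 = lam N * (sqrt (1 + rho N * scale N) - 1)\<^sup>2"
        using pos by (simp add: power_mult_distrib)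
      show ?case
        unfolding L G1_def G2_def ln_eq sq_eq using pos by (simp add: power2_eq_square field_simps)
    qed
  qed
qed

lemma eventually_less_over_L:
  assumes "(\<lambda>N. e N / L N) \<longlonglongrightarrow> c" "c + b < d"
  shows "\<forall>\<^sub>F N in sequentially. e N + a + b * L N < d * L N"
proof -
  have "(\<lambda>N. e N / L N + a / L N + b) \<longlonglongrightarrow> c + 0 + b"
    by (intro tendsto_add tendsto_diff assms tendsto_const_over_L tendsto_const)
  then have "\<forall>\<^sub>F N in sequentially. e N / L N + a / L N + b < d"
    using assms(2) by (intro order_tendstoD(2)) auto
  then show ?thesis
    using eventually_L_pos by eventually_elim (simp add: field_simps)
qed

lemma eventually_greater_over_L:
  assumes "(\<lambda>N. e N / L N) \<longlonglongrightarrow> c" "d < c"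
  shows "\<forall>\<^sub>F N in sequentially. d * L N < e N - a"
proof -
  have "(\<lambda>N. e N / L N - a / L N) \<longlonglongrightarrow> c - 0"
    by (intro tendsto_add tendsto_diff assms tendsto_const_over_L tendsto_const)
  then have "\<forall>\<^sub>F N in sequentially. d < e N / L N - a / L N"
    using assms(2) by (intro order_tendstoD(1)) auto
  then show ?thesis
    using eventually_L_pos by eventually_elim (simp add: field_simps)
qed

context
  fixes k :: real
  assumes k_pos: "0 < k"
begin

definition tilted_mean_x :: "nat \<Rightarrow> real" where
  "tilted_mean_x N = lam N * exp (- (k * scale N))"

definition tilted_mean_y :: "nat \<Rightarrow> real" where
  "tilted_mean_y N = lam' N * exp (k * scale N)"

definition window_width :: "nat \<Rightarrow> real" where
  "window_width N = 4 * sqrt (tilted_mean_x N) + 4 * sqrt (tilted_mean_y N)"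

lemma tendsto_comp_k_scale: "(f \<longlongrightarrow> c) (at 0) \<Longrightarrow> (\<lambda>N. f (k * scale N)) \<longlonglongrightarrow> c"
  using tendsto_comp_mult_scale[OF _ tendsto_const k_pos] .

lemma tendsto_exp_k_scale:
  "(\<lambda>N. exp (k * scale N)) \<longlonglongrightarrow> 1" "(\<lambda>N. exp (- (k * scale N))) \<longlonglongrightarrow> 1"
  by (auto intro!: tendsto_eq_intros scale_lim)

lemma tendsto_cgf_over_L: "(\<lambda>N. skellam_cgf (lam N) (lam' N) (k * scale N) / L N) \<longlonglongrightarrow> k\<^sup>2 + rho0 * k"
proof -
  define F1 where "F1 N = (exp (- (k * scale N)) + exp (k * scale N) - 2) / (k * scale N)\<^sup>2" for N
  define F2 where "F2 N = (exp (k * scale N) - 1) / (k * scale N)" for N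
  have F1: "F1 \<longlonglongrightarrow> 1"
    unfolding F1_def[abs_def]
    by (rule tendsto_comp_k_scale[of "\<lambda>h. (exp (- h) + exp h - 2) / h\<^sup>2"]) real_asymp
  have F2: "F2 \<longlonglongrightarrow> 1"
    unfolding F2_def[abs_def] by (rule tendsto_comp_k_scale[of "\<lambda>h. (exp h - 1) / h"]) real_asymp
  have "(\<lambda>N. k\<^sup>2 * F1 N + rho N * k * F2 N) \<longlonglongrightarrow> k\<^sup>2 * 1 + rho0 * k * 1"
    by (intro tendsto_add tendsto_mult tendsto_const F1 F2 rho_lim)
  then show ?thesis
    unfolding mult_1_right
  proof (rule Lim_transform_eventually)
    show "\<forall>\<^sub>F N in sequentially. k\<^sup>2 * F1 N + rho N * k * F2 N
      = skellam_cgf (lam N) (lam' N) (k * scale N) / L N"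
      using eventually_scaling
      by eventually_elim (use k_pos in \<open>simp add: F1_def F2_def skellam_cgf_def power2_eq_square field_simps\<close>)
  qed
qed

lemma tendsto_tilted_mean_diff:
  "(\<lambda>N. (tilted_mean_y N - tilted_mean_x N) / (lam N * scale N)) \<longlonglongrightarrow> 2 * k + rho0"
proof -
  define F where "F N = (exp (k * scale N) - exp (- (k * scale N))) / (k * scale N)" for N
  have F: "F \<longlonglongrightarrow> 2"
    unfolding F_def[abs_def] by (rule tendsto_comp_k_scale[of "\<lambda>h. (exp h - exp (- h)) / h"]) real_asymp
  have "(\<lambda>N. k * F N + rho N * exp (k * scale N)) \<longlonglongrightarrow> k * 2 + rho0 * 1"
    by (intro tendsto_add tendsto_mult tendsto_const F rho_lim tendsto_exp_k_scale)
  then show ?thesis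
    unfolding mult_1_right mult.commute[of k 2]
  proof (rule Lim_transform_eventually)
    show "\<forall>\<^sub>F N in sequentially. k * F N + rho N * exp (k * scale N)
      = (tilted_mean_y N - tilted_mean_x N) / (lam N * scale N)"
      using eventually_scaling
      by eventually_elim (use k_pos in \<open>simp add: F_def tilted_mean_x_def tilted_mean_y_def field_simps\<close>)
  qed
qed

lemma tendsto_tilted_mean_sum: "(\<lambda>N. (tilted_mean_x N + tilted_mean_y N) / lam N) \<longlonglongrightarrow> 2"
proof -
  have "(\<lambda>N. exp (- (k * scale N)) + (1 + rho N * scale N) * exp (k * scale N)) \<longlonglongrightarrow> 2"
    by (auto intro!: tendsto_eq_intros tendsto_exp_k_scale rho_lim scale_lim)
  then show ?thesis
  proof (rule Lim_transform_eventually)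
    show "\<forall>\<^sub>F N in sequentially. exp (- (k * scale N)) + (1 + rho N * scale N) * exp (k * scale N)
      = (tilted_mean_x N + tilted_mean_y N) / lam N"
      using eventually_scaling
      by eventually_elim (simp add: tilted_mean_x_def tilted_mean_y_def field_simps)
  qed
qed

lemma tendsto_window_width: "(\<lambda>N. window_width N / (lam N * scale N)) \<longlonglongrightarrow> 0"
proof -
  have "(\<lambda>N. 4 * (sqrt (exp (- (k * scale N))) + sqrt ((1 + rho N * scale N) * exp (k * scale N)))
        * (1 / sqrt (L N)))
      \<longlonglongrightarrow> 4 * (sqrt 1 + sqrt ((1 + rho0 * 0) * 1)) * 0"
    by (intro tendsto_exp_k_scale tendsto_inverse_sqrt_L rho_lim scale_lim tendsto_intros)
  then show ?thesis
    unfolding mult_zero_right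
  proof (rule Lim_transform_eventually)
    show "\<forall>\<^sub>F N in sequentially.
      4 * (sqrt (exp (- (k * scale N))) + sqrt ((1 + rho N * scale N) * exp (k * scale N))) * (1 / sqrt (L N))
      = window_width N / (lam N * scale N)"
      using eventually_scaling
    proof eventually_elim
      case (elim N)
      then have pos: "0 < lam N" "0 < L N" and "sqrt (L N) = sqrt (lam N) * scale N"
        and lam': "lam' N = lam N * (1 + rho N * scale N)"
        by auto
      then have "lam N * scale N = sqrt (lam N) * sqrt (L N)"
        by (simp add: mult.assoc[symmetric])
      moreover have "sqrt (tilted_mean_x N) = sqrt (lam N) * sqrt (exp (- (k * scale N)))"
        "sqrt (tilted_mean_y N) = sqrt (lam N) * sqrt ((1 + rho N * scale N) * exp (k * scale N))"
        unfolding tilted_mean_x_def tilted_mean_y_def lam' by (simp_all add: real_sqrt_mult mult.assoc)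
      ultimately show ?case
        using pos by (simp add: window_width_def field_simps)
    qed
  qed
qed

lemma eventually_tilted_means_ge:
  "\<forall>\<^sub>F N in sequentially. c \<le> tilted_mean_x N \<and> c \<le> tilted_mean_y N"
proof -
  have "(\<lambda>N. exp (- (k * scale N))) \<longlonglongrightarrow> 1"
    "(\<lambda>N. (1 + rho N * scale N) * exp (k * scale N)) \<longlonglongrightarrow> (1 + rho0 * 0) * 1"
    by (intro tendsto_exp_k_scale rho_lim scale_lim tendsto_intros)+
  then have "filterlim (\<lambda>N. exp (- (k * scale N)) * lam N) at_top sequentially"
    "filterlim (\<lambda>N. ((1 + rho N * scale N) * exp (k * scale N)) * lam N) at_top sequentially"
    by (auto intro!: filterlim_tendsto_pos_mult_at_top[OF _ _ lam_at_top])
  then have "\<forall>\<^sub>F N in sequentially. c \<le> exp (- (k * scale N)) * lam N \<and>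
      c \<le> ((1 + rho N * scale N) * exp (k * scale N)) * lam N"
    by (auto simp: filterlim_at_top intro: eventually_conj)
  then show ?thesis
    using eventually_scaling
    by eventually_elim (simp add: tilted_mean_x_def tilted_mean_y_def mult_ac)
qed

lemma tendsto_rejection_margin:
  "(\<lambda>N. (tilted_mean_y N - tilted_mean_x N - window_width N)\<^sup>2
          / (2 * (tilted_mean_x N + tilted_mean_y N + window_width N)) / L N)
     \<longlonglongrightarrow> (2 * k + rho0)\<^sup>2 / 4"
proof -
  define D where "D N = (tilted_mean_y N - tilted_mean_x N) / (lam N * scale N)" for N
  define W where "W N = window_width N / (lam N * scale N)" for N
  define S where "S N = (tilted_mean_x N + tilted_mean_y N) / lam N" for N
  have "D \<longlonglongrightarrow> 2 * k + rho0" "W \<longlonglongrightarrow> 0" "S \<longlonglongrightarrow> 2"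
    unfolding D_def[abs_def] W_def[abs_def] S_def[abs_def]
    by (fact tendsto_tilted_mean_diff tendsto_window_width tendsto_tilted_mean_sum)+
  then have "(\<lambda>N. (D N - W N)\<^sup>2 / (2 * (S N + scale N * W N))) \<longlonglongrightarrow> (2 * k + rho0)\<^sup>2 / 4"
    by (auto intro!: tendsto_eq_intros scale_lim)
  then show ?thesis
  proof (rule Lim_transform_eventually)
    show "\<forall>\<^sub>F N in sequentially. (D N - W N)\<^sup>2 / (2 * (S N + scale N * W N))
      = (tilted_mean_y N - tilted_mean_x N - window_width N)\<^sup>2
          / (2 * (tilted_mean_x N + tilted_mean_y N + window_width N)) / L N"
      using eventually_scaling eventually_tilted_means_ge[of 1]
    proof eventually_elim
      case (elim N)
      then have pos: "0 < lam N" "0 < scale N" and L: "L N = lam N * (scale N)\<^sup>2"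
        by auto
      define X where "X = tilted_mean_y N - tilted_mean_x N - window_width N"
      define Y where "Y = tilted_mean_x N + tilted_mean_y N + window_width N"
      have "0 < Y"
        using elim by (simp add: Y_def window_width_def add_pos_nonneg)
      have "D N - W N = X / (lam N * scale N)"
        by (simp add: D_def W_def X_def diff_divide_distrib)
      moreover have "S N + scale N * W N = Y / lam N"
        using pos by (simp add: S_def W_def Y_def field_simps)
      moreover have "(X / (lam N * scale N))\<^sup>2 / (2 * (Y / lam N)) = X\<^sup>2 / (2 * Y) / (lam N * (scale N)\<^sup>2)"
        using pos \<open>0 < Y\<close> by (simp add: power2_eq_square field_simps)
      ultimately show ?case
        unfolding L X_def Y_def by simp
    qed
  qed
qed

lemma tendsto_tilting_cost:
  "(\<lambda>N. (skellam_cgf (lam N) (lam' N) (k * scale N)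
        - k * scale N * (tilted_mean_y N - tilted_mean_x N + window_width N)) / L N)
     \<longlonglongrightarrow> - k\<^sup>2"
proof -
  define K where "K N = skellam_cgf (lam N) (lam' N) (k * scale N) / L N" for N
  define D where "D N = (tilted_mean_y N - tilted_mean_x N) / (lam N * scale N)" for N
  define W where "W N = window_width N / (lam N * scale N)" for N
  have "K \<longlonglongrightarrow> k\<^sup>2 + rho0 * k" "D \<longlonglongrightarrow> 2 * k + rho0" "W \<longlonglongrightarrow> 0"
    unfolding K_def[abs_def] D_def[abs_def] W_def[abs_def]
    by (fact tendsto_cgf_over_L tendsto_tilted_mean_diff tendsto_window_width)+
  then have "(\<lambda>N. K N - k * D N - k * W N) \<longlonglongrightarrow> - k\<^sup>2"
    by (auto intro!: tendsto_eq_intros simp: power2_eq_square algebra_simps)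
  then show ?thesis
  proof (rule Lim_transform_eventually)
    show "\<forall>\<^sub>F N in sequentially. K N - k * D N - k * W N
      = (skellam_cgf (lam N) (lam' N) (k * scale N)
        - k * scale N * (tilted_mean_y N - tilted_mean_x N + window_width N)) / L N"
      using eventually_scaling by eventually_elim (simp add: K_def D_def W_def power2_eq_square field_simps)
  qed
qed

lemma eventually_prob_pval_ge_tilted:
  assumes "q < (2 * k + rho0)\<^sup>2 / 4" "b < - k\<^sup>2"
  shows "\<forall>\<^sub>F N in sequentially. exp (b * L N)
    \<le> measure_pmf.prob (pair_pmf (poisson_pmf (lam N)) (poisson_pmf (lam' N))) {(x, y). pval x y \<le> exp (- q * L N)}"
proof -
  have "(\<lambda>N. (tilted_mean_y N - tilted_mean_x N) / (lam N * scale N) - window_width N / (lam N * scale N))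
      \<longlonglongrightarrow> 2 * k + rho0 - 0"
    using tendsto_tilted_mean_diff tendsto_window_width by (rule tendsto_diff)
  moreover have "0 < 2 * k + rho0 - 0"
    using k_pos rho0_pos by simp
  ultimately have gap: "\<forall>\<^sub>F N in sequentially.
      0 < (tilted_mean_y N - tilted_mean_x N) / (lam N * scale N) - window_width N / (lam N * scale N)"
    by (rule order_tendstoD(1))
  have margin: "\<forall>\<^sub>F N in sequentially. q * L N < (tilted_mean_y N - tilted_mean_x N - window_width N)\<^sup>2
      / (2 * (tilted_mean_x N + tilted_mean_y N + window_width N)) - ln 2"
    using assms(1) by (rule eventually_greater_over_L[OF tendsto_rejection_margin])
  have cost: "\<forall>\<^sub>F N in sequentially. b * L N < skellam_cgf (lam N) (lam' N) (k * scale N)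
      - k * scale N * (tilted_mean_y N - tilted_mean_x N + window_width N) - ln 2"
    using assms(2) by (rule eventually_greater_over_L[OF tendsto_tilting_cost])
  show ?thesis
    using eventually_tilted_means_ge[of 4] gap margin cost eventually_scaling
  proof eventually_elim
    case (elim N)
    let ?cost = "skellam_cgf (lam N) (lam' N) (k * scale N)
      - k * scale N * (tilted_mean_y N - tilted_mean_x N + window_width N)"
    have "0 < lam N * scale N"
      using elim(5) by simp
    then have "window_width N < tilted_mean_y N - tilted_mean_x N"
      using elim(2) by (simp add: diff_divide_distrib[symmetric] zero_less_divide_iff)
    moreover have "exp (- ((tilted_mean_y N - tilted_mean_x N - window_width N)\<^sup>2
        / (2 * (tilted_mean_x N + tilted_mean_y N + window_width N)))) \<le> exp (- q * L N) / 2"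
      unfolding exp_le_half_exp_iff using elim(3) by simp
    ultimately have "exp ?cost / 2 \<le> measure_pmf.prob (pair_pmf (poisson_pmf (lam N)) (poisson_pmf (lam' N)))
        {(x, y). pval x y \<le> exp (- q * L N)}"
      using prob_pval_le_lower_bound[of "lam N" "lam' N" "k * scale N" "exp (- q * L N)"] elim(1,5) k_pos
      by (simp add: tilted_mean_x_def tilted_mean_y_def window_width_def add_pos_pos)
    moreover have "exp (b * L N) \<le> exp ?cost / 2"
      unfolding exp_le_half_exp_iff using elim(4) by simp
    ultimately show ?case
      by linarith
  qed
qed

end

theorem eventually_prob_pval_ge:
  assumes "0 < \<eta>"
  shows "\<forall>\<^sub>F N in sequentially. exp (- ((sqrt q - rho0 / 2)\<^sup>2 + \<eta>) * L N)
    \<le> measure_pmf.prob (pair_pmf (poisson_pmf (lam N)) (poisson_pmf (lam' N))) {(x, y). pval x y \<le> exp (- q * L N)}"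
proof -
  \<comment> \<open>Any \<open>k > \<bar>sqrt q - rho0 / 2\<bar>\<close> separates the tilted means enough; this one leaves \<open>\<eta> / 2\<close> to spare.\<close>
  define k where "k = sqrt ((sqrt q - rho0 / 2)\<^sup>2 + \<eta> / 2)"
  have "0 < (sqrt q - rho0 / 2)\<^sup>2 + \<eta> / 2"
    using assms zero_le_power2[of "sqrt q - rho0 / 2"] by linarith
  then have "0 < k" and k_sq: "k\<^sup>2 = (sqrt q - rho0 / 2)\<^sup>2 + \<eta> / 2"
    unfolding k_def by simp_all
  have "q < (2 * k + rho0)\<^sup>2 / 4"
  proof (cases "0 \<le> q")
    case True
    have "sqrt q - rho0 / 2 < k"
      unfolding k_def using assms by (intro real_less_rsqrt) linarith
    then have "(2 * sqrt q)\<^sup>2 < (2 * k + rho0)\<^sup>2"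
      using True by (intro power_strict_mono) auto
    then show ?thesis
      using True by (simp add: power_mult_distrib)
  qed (use zero_le_power2[of "2 * k + rho0"] in linarith)
  moreover have "- ((sqrt q - rho0 / 2)\<^sup>2 + \<eta>) < - k\<^sup>2"
    using k_sq assms by simp
  ultimately show ?thesis
    by (rule eventually_prob_pval_ge_tilted[OF \<open>0 < k\<close>])
qed

theorem eventually_prob_pval_le:
  assumes "rho0\<^sup>2 / 4 < q" "0 < \<eta>"
  shows "\<forall>\<^sub>F N in sequentially.
    measure_pmf.prob (pair_pmf (poisson_pmf (lam N)) (poisson_pmf (lam' N))) {(x, y). pval x y \<le> exp (- q * L N)}
    \<le> exp ((- (sqrt q - rho0 / 2)\<^sup>2 + \<eta>) * L N)"
proof -
  \<comment> \<open>Splitting at \<open>Y - X = c * lam * scale\<close>, the null part and the Chernoff tail both cost \<open>exp (- k\<^sup>2 * L)\<close>.\<close>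
  define k where "k = sqrt q - rho0 / 2"
  define c where "c = 2 * sqrt q"
  have "0 \<le> q"
    using assms(1) zero_le_power2[of rho0] by linarith
  have "0 < k"
    using assms rho0_pos real_less_rsqrt[of "rho0 / 2" q] by (simp add: k_def power_divide)
  have null_exponent: "c * rho0 / 2 - rho0\<^sup>2 / 4 + - q = - k\<^sup>2"
    using \<open>0 \<le> q\<close> by (simp add: k_def c_def power2_eq_square algebra_simps)
  have tail_exponent: "k\<^sup>2 + rho0 * k + - k * c = - k\<^sup>2"
    by (simp add: k_def c_def power2_eq_square algebra_simps)
  have "\<forall>\<^sub>F N in sequentially.
      ln (lam' N / lam N) / 2 * (c * lam N * scale N) - (sqrt (lam' N) - sqrt (lam N))\<^sup>2 + ln 2 + (- q) * L N
      < (- k\<^sup>2 + \<eta>) * L N"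
    using assms(2) by (intro eventually_less_over_L[OF tendsto_null_tilt_exponent]) (use null_exponent in linarith)
  moreover have "\<forall>\<^sub>F N in sequentially.
      skellam_cgf (lam N) (lam' N) (k * scale N) + ln 2 + (- k * c) * L N < (- k\<^sup>2 + \<eta>) * L N"
    using assms(2) by (intro eventually_less_over_L[OF tendsto_cgf_over_L[OF \<open>0 < k\<close>]]) (use tail_exponent in linarith)
  ultimately show ?thesis
    using eventually_scaling
  proof eventually_elim
    case (elim N)
    have "k * scale N * (c * lam N * scale N) = k * c * L N"
      using elim(3) by (simp add: power2_eq_square)
    show ?case
      unfolding k_def[symmetric]
    proof (rule prob_pval_le_exp[where t = "k * scale N" and d = "c * lam N * scale N"])
      show "0 < lam N" "lam N \<le> lam' N" "0 \<le> k * scale N"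
        using elim(3) \<open>0 < k\<close> by auto
      show "ln (lam' N / lam N) / 2 * (c * lam N * scale N) - (sqrt (lam' N) - sqrt (lam N))\<^sup>2
          + - q * L N + ln 2 \<le> (- k\<^sup>2 + \<eta>) * L N"
        using elim(1) by linarith
      show "skellam_cgf (lam N) (lam' N) (k * scale N) - k * scale N * (c * lam N * scale N) + ln 2
          \<le> (- k\<^sup>2 + \<eta>) * L N"
        using elim(2) \<open>k * scale N * (c * lam N * scale N) = k * c * L N\<close> by linarith
    qed
  qed
qed

end

lemma exists_vanishing_exponent_lower:
  fixes f :: "nat \<Rightarrow> real"
  assumes "\<And>\<eta>. 0 < \<eta> \<Longrightarrow> \<forall>\<^sub>F N in sequentially. real N powr (a - \<eta>) \<le> f N"
  shows "\<exists>\<delta>. \<delta> \<longlonglongrightarrow> 0 \<and> (\<forall>\<^sub>F N in sequentially. real N powr (a + \<delta> N) \<le> f N)"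
proof -
  define \<delta> where "\<delta> N = (if 1 < N \<and> 0 < f N then min 0 (ln (f N) / ln (real N) - a) else 0)" for N
  have large: "\<forall>\<^sub>F N in sequentially. 1 < N \<and> 0 < f N"
    using assms[OF zero_less_one] eventually_gt_at_top[of 1]
  proof eventually_elim
    case (elim N)
    moreover have "0 < real N powr (a - 1)"
      using elim by simp
    ultimately show ?case
      by linarith
  qed
  have "\<delta> \<longlonglongrightarrow> 0"
  proof (rule order_tendstoI)
    fix \<epsilon> :: real assume "\<epsilon> < 0"
    then have "0 < - \<epsilon> / 2"
      by simp
    show "\<forall>\<^sub>F N in sequentially. \<epsilon> < \<delta> N"
      using assms[OF \<open>0 < - \<epsilon> / 2\<close>] large
    proof eventually_elim
      case (elim N)
      then have "ln (real N powr (a + \<epsilon> / 2)) \<le> ln (f N)"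
        by (subst ln_le_cancel_iff) auto
      then have "(a + \<epsilon> / 2) * ln (real N) \<le> ln (f N)"
        by simp
      then have "a + \<epsilon> / 2 \<le> ln (f N) / ln (real N)"
        using elim by (simp add: le_divide_eq)
      then show ?case
        using elim \<open>\<epsilon> < 0\<close> by (simp add: \<delta>_def)
    qed
  qed (auto simp: \<delta>_def intro!: always_eventually)
  moreover have "\<forall>\<^sub>F N in sequentially. real N powr (a + \<delta> N) \<le> f N"
    using large
  proof eventually_elim
    case (elim N)
    then have "real N powr (a + \<delta> N) \<le> real N powr (ln (f N) / ln (real N))"
      by (intro powr_mono) (auto simp: \<delta>_def)
    also have "\<dots> = f N"
      using elim by (simp add: powr_def)
    finally show ?case .
  qed
  ultimately show ?thesis
    by blast
qed

lemma exists_vanishing_exponent_upper: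
  fixes f :: "nat \<Rightarrow> real"
  assumes "\<And>\<eta>. 0 < \<eta> \<Longrightarrow> \<forall>\<^sub>F N in sequentially. f N \<le> real N powr (a + \<eta>)"
  shows "\<exists>\<delta>. \<delta> \<longlonglongrightarrow> 0 \<and> (\<forall>\<^sub>F N in sequentially. f N \<le> real N powr (a + \<delta> N))"
proof -
  define \<delta> where "\<delta> N = (if 1 < N \<and> 0 < f N then max 0 (ln (f N) / ln (real N) - a) else 0)" for N
  have "\<delta> \<longlonglongrightarrow> 0"
  proof (rule order_tendstoI)
    fix \<epsilon> :: real assume "0 < \<epsilon>"
    show "\<forall>\<^sub>F N in sequentially. \<delta> N < \<epsilon>"
      using assms[OF half_gt_zero[OF \<open>0 < \<epsilon>\<close>]] eventually_gt_at_top[of 1]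
    proof eventually_elim
      case (elim N)
      show ?case
      proof (cases "0 < f N")
        case True
        then have "ln (f N) \<le> ln (real N powr (a + \<epsilon> / 2))"
          using elim by (subst ln_le_cancel_iff) auto
        then have "ln (f N) \<le> (a + \<epsilon> / 2) * ln (real N)"
          by simp
        then have "ln (f N) / ln (real N) \<le> a + \<epsilon> / 2"
          using elim by (simp add: divide_le_eq)
        then show ?thesis
          using elim \<open>0 < \<epsilon>\<close> by (simp add: \<delta>_def)
      qed (use \<open>0 < \<epsilon>\<close> in \<open>simp add: \<delta>_def\<close>)
    qed
  qed (auto simp: \<delta>_def intro!: always_eventually)
  moreover have "\<forall>\<^sub>F N in sequentially. f N \<le> real N powr (a + \<delta> N)"
    using eventually_gt_at_top[of 1]
  proof eventually_elim
    case (elim N)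
    show ?case
    proof (cases "0 < f N")
      case True
      then have "f N = real N powr (ln (f N) / ln (real N))"
        using elim by (simp add: powr_def)
      also have "\<dots> \<le> real N powr (a + \<delta> N)"
        using elim True by (intro powr_mono) (auto simp: \<delta>_def)
      finally show ?thesis .
    qed (use powr_ge_zero[of "real N" "a + \<delta> N"] in linarith)
  qed
  ultimately show ?thesis
    by blast
qed

lemma poisson_mean_shift_ln:
  assumes "0 < r" "filterlim (\<lambda>N. lam N / ln (real N)) at_top sequentially" "eps \<longlonglongrightarrow> 0"
    and "\<And>N. lam' N = lam N + sqrt (2 * lam N * r * ln (real N) * (1 + eps N))"
  shows "poisson_mean_shift lam lam' (\<lambda>N. ln (real N)) (\<lambda>N. sqrt (2 * r * (1 + eps N))) (sqrt (2 * r))"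
proof
  show "\<forall>\<^sub>F N in sequentially. 0 < lam N"
    using assms(2)[unfolded filterlim_at_top_dense, rule_format, of 0] eventually_gt_at_top[of 1]
    by eventually_elim (simp add: zero_less_divide_iff)
  show "lam' N = lam N + sqrt (2 * r * (1 + eps N)) * sqrt (lam N * ln (real N))" for N
    by (simp add: assms(4) real_sqrt_mult[symmetric] ac_simps)
  show "filterlim (\<lambda>N. ln (real N)) at_top sequentially"
    by real_asymp
  show "(\<lambda>N. ln (real N) / lam N) \<longlonglongrightarrow> 0"
    using tendsto_inverse_0_at_top[OF assms(2)] by simp
  show "(\<lambda>N. sqrt (2 * r * (1 + eps N))) \<longlonglongrightarrow> sqrt (2 * r)"
    using assms(3) by (auto intro!: tendsto_eq_intros)
  show "0 < sqrt (2 * r)"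
    using assms(1) by simp
qed

theorem lemma5:
  fixes r q :: real and lam lam' eps :: "nat \<Rightarrow> real"
  assumes r_pos: "r > 0"
    and q_gt: "q > r / 2"
    and lam_growth: "filterlim (\<lambda>N. lam N / ln (real N)) at_top sequentially"
    and eps_lim: "eps \<longlonglongrightarrow> 0"
    and lam'_def: "\<And>N. lam' N = lam N + sqrt (2 * lam N * r * ln (real N) * (1 + eps N))"
  defines "P \<equiv> (\<lambda>N. measure_pmf.prob (pair_pmf (poisson_pmf (lam N)) (poisson_pmf (lam' N)))
                   {(x, y). pval x y \<le> real N powr (- q)})"
  shows "(\<exists>\<delta> :: nat \<Rightarrow> real. \<delta> \<longlonglongrightarrow> 0 \<and>
            (\<forall>\<^sub>F N in sequentially. P N \<ge> real N powr (- alpha_high q r + \<delta> N)))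
       \<and> (\<exists>\<delta>1 \<delta>2 :: nat \<Rightarrow> real. \<delta>1 \<longlonglongrightarrow> 0 \<and> \<delta>2 \<longlonglongrightarrow> 0 \<and>
            (\<forall>\<^sub>F N in sequentially.
               P N \<le> real N powr (- 1 + \<delta>1 N) + real N powr (- alpha_high q r + \<delta>2 N)))"
proof -
  interpret poisson_mean_shift lam lam' "\<lambda>N. ln (real N)" "\<lambda>N. sqrt (2 * r * (1 + eps N))" "sqrt (2 * r)"
    using poisson_mean_shift_ln[OF r_pos lam_growth eps_lim lam'_def] .
  have "sqrt (2 * r) = sqrt 4 * sqrt (r / 2)"
    by (simp only: real_sqrt_mult[symmetric]) simp
  then have alpha: "alpha_high q r = (sqrt q - sqrt (2 * r) / 2)\<^sup>2"
    by (simp add: alpha_high_def)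
  have "(sqrt (2 * r))\<^sup>2 / 4 < q"
    using r_pos q_gt by simp
  have P_eq: "\<forall>\<^sub>F N in sequentially. P N = measure_pmf.prob (pair_pmf (poisson_pmf (lam N)) (poisson_pmf (lam' N)))
      {(x, y). pval x y \<le> exp (- q * ln (real N))} \<and> (\<forall>a. real N powr a = exp (a * ln (real N)))"
    using eventually_gt_at_top[of 0] by eventually_elim (simp add: P_def powr_def)
  have lower: "\<forall>\<^sub>F N in sequentially. real N powr (- alpha_high q r - \<eta>) \<le> P N" if "0 < \<eta>" for \<eta>
    using eventually_prob_pval_ge[OF that, where q = q] P_eq by eventually_elim (simp add: alpha)
  have upper: "\<forall>\<^sub>F N in sequentially. P N \<le> real N powr (- alpha_high q r + \<eta>)" if "0 < \<eta>" for \<eta>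
    using eventually_prob_pval_le[OF \<open>(sqrt (2 * r))\<^sup>2 / 4 < q\<close> that] P_eq by eventually_elim (simp add: alpha)
  obtain \<delta> where "\<delta> \<longlonglongrightarrow> 0" "\<forall>\<^sub>F N in sequentially. real N powr (- alpha_high q r + \<delta> N) \<le> P N"
    using exists_vanishing_exponent_lower[OF lower] by blast
  moreover obtain \<delta>2 where "\<delta>2 \<longlonglongrightarrow> 0" "\<forall>\<^sub>F N in sequentially. P N \<le> real N powr (- alpha_high q r + \<delta>2 N)"
    using exists_vanishing_exponent_upper[OF upper] by blast
  moreover have "\<forall>\<^sub>F N in sequentially. P N \<le> real N powr (- 1 + 0) + real N powr (- alpha_high q r + \<delta>2 N)"
    using calculation(4) by eventually_elim (simp add: add_increasing)
  ultimately show ?thesis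
    by (intro conjI exI[of _ \<delta>] exI[of _ "\<lambda>_. 0"] exI[of _ \<delta>2]) auto
qed

end
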